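(* Let $X\subset[0,1]$ with a $\sigma$-algebra $\mathcal F$ containing the Borel subsets of $X$, let $\mu\colon\mathcal F\to[0,1]$ be a monotone measure, let $A\in\mathcal F$, and let $f\colon X\to[0,1]$ be a non-decreasing measurable function. Writing $N(\phi)=\sup_{\alpha\in[0,1]}\alpha\,\mu(A\cap\{\phi\ge\alpha\})$ for the Shilkret integral of a measurable $\phi\colon X\to[0,1]$ over $A$, and $K=\mu(A)\cdot N(x)$ (where $N(x)$ is the Shilkret integral of the identity function $x\mapsto x$), if $K>0$ then $$N(f)\le \frac{1}{\sqrt K}\,\big(N(f^2)\big)^{1/4}\big(N(x^2f^2)\big)^{1/4}.$$
   Context: A monotone measure is a map $\mu$ on $\mathcal F$ with $\mu(\emptyset)=0$, $\mu(X)>0$ and $\mu(A)\le\mu(B)$ whenever $A\subset B$. Here $\{\phi\ge\alpha\}=\{x\in X:\phi(x)\ge\alpha\}$, and $x^2f^2$ denotes the function $x\mapsto x^2 f(x)^2$. *)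

theory Defs
  imports "HOL-Analysis.Analysis"
begin

definition monotone_measure :: "'a set \<Rightarrow> 'a set set \<Rightarrow> ('a set \<Rightarrow> real) \<Rightarrow> bool" where
  "monotone_measure X F \<mu> \<longleftrightarrow> \<mu> {} = 0 \<and> \<mu> X > 0 \<and>
     (\<forall>B\<in>F. \<forall>C\<in>F. B \<subseteq> C \<longrightarrow> \<mu> B \<le> \<mu> C)"

definition shilkret :: "'a set \<Rightarrow> ('a set \<Rightarrow> real) \<Rightarrow> 'a set \<Rightarrow> ('a \<Rightarrow> real) \<Rightarrow> real" where
  "shilkret X \<mu> A \<phi> = (SUP \<alpha>\<in>{0..1}. \<alpha> * \<mu> (A \<inter> {x\<in>X. \<phi> x \<ge> \<alpha>}))"

end

theory Submission
  imports Defs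
begin

text \<open>
  Since \<open>\<mu> \<le> 1\<close>, squaring a Shilkret integrand at level \<open>\<alpha>\<close> costs at most one factor of the
  measure, so \<open>N(\<phi>)\<^sup>2 \<le> N(\<phi>\<^sup>2)\<close>. Two non-decreasing functions have nested superlevel
  sets, so their product exceeds \<open>\<alpha>\<beta>\<close> on the smaller of the two level sets; with \<open>\<mu> \<le> 1\<close> this
  gives \<open>N(f) N(x) \<le> N(x f)\<close>, hence \<open>(N(f) N(x))\<^sup>2 \<le> N(x\<^sup>2f\<^sup>2)\<close>. Taking fourth roots and
  using \<open>\<mu>(A) \<le> 1\<close> yields the inequality.
\<close>

lemma mono_on_superlevel_in_sigma:
  fixes g :: "real \<Rightarrow> real"
  assumes mono: "mono_on X g" and borel: "\<forall>B\<in>sets borel. X \<inter> B \<in> F"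
  shows "{x\<in>X. c \<le> g x} \<in> F"
proof -
  define I where "I = {y. \<exists>u\<in>X. c \<le> g u \<and> u \<le> y}"
  have "is_interval I"
    unfolding is_interval_1 I_def by (blast intro: order_trans)
  then have "I \<in> sets borel"
    by (rule real_interval_borel_measurable)
  moreover have "X \<inter> I = {x\<in>X. c \<le> g x}"
    using mono_onD[OF mono] unfolding I_def by (auto intro: order_trans)
  ultimately show ?thesis
    using borel by metis
qed

lemma mono_on_mult_nonneg:
  fixes \<phi> \<psi> :: "'a::order \<Rightarrow> real"
  assumes "mono_on X \<phi>" "mono_on X \<psi>" "\<And>x. x \<in> X \<Longrightarrow> 0 \<le> \<phi> x" "\<And>x. x \<in> X \<Longrightarrow> 0 \<le> \<psi> x"
  shows "mono_on X (\<lambda>x. \<phi> x * \<psi> x)"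
  using assms by (intro mono_onI) (auto intro: mult_mono dest: mono_onD)

lemma mono_on_power2_nonneg:
  fixes \<phi> :: "'a::order \<Rightarrow> real"
  assumes "mono_on X \<phi>" "\<And>x. x \<in> X \<Longrightarrow> 0 \<le> \<phi> x"
  shows "mono_on X (\<lambda>x. (\<phi> x)\<^sup>2)"
  using mono_on_mult_nonneg[OF assms(1,1,2,2)] by (simp add: power2_eq_square)

definition comonotone_on :: "'a set \<Rightarrow> ('a \<Rightarrow> real) \<Rightarrow> ('a \<Rightarrow> real) \<Rightarrow> bool" where
  "comonotone_on X \<phi> \<psi> \<longleftrightarrow> (\<forall>x\<in>X. \<forall>y\<in>X. 0 \<le> (\<phi> x - \<phi> y) * (\<psi> x - \<psi> y))"

lemma mono_on_imp_comonotone_on: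
  fixes \<phi> \<psi> :: "'a::linorder \<Rightarrow> real"
  assumes "mono_on X \<phi>" "mono_on X \<psi>"
  shows "comonotone_on X \<phi> \<psi>"
  unfolding comonotone_on_def
proof (intro ballI)
  fix x y assume "x \<in> X" "y \<in> X"
  then consider "x \<le> y" "\<phi> x \<le> \<phi> y" "\<psi> x \<le> \<psi> y" | "y \<le> x" "\<phi> y \<le> \<phi> x" "\<psi> y \<le> \<psi> x"
    using assms by (metis linear mono_onD)
  then show "0 \<le> (\<phi> x - \<phi> y) * (\<psi> x - \<psi> y)"
    by cases (auto intro: mult_nonpos_nonpos)
qed

lemma comonotone_on_superlevel_nested:
  assumes "comonotone_on X \<phi> \<psi>"
  shows "{x\<in>X. \<alpha> \<le> \<phi> x} \<subseteq> {x\<in>X. \<beta> \<le> \<psi> x} \<or> {x\<in>X. \<beta> \<le> \<psi> x} \<subseteq> {x\<in>X. \<alpha> \<le> \<phi> x}"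
proof (rule ccontr)
  assume "\<not> ?thesis"
  then obtain u v where u: "u \<in> X" "\<alpha> \<le> \<phi> u" "\<psi> u < \<beta>" and v: "v \<in> X" "\<beta> \<le> \<psi> v" "\<phi> v < \<alpha>"
    by (metis (mono_tags, lifting) mem_Collect_eq not_le subsetI)
  then have "(\<phi> u - \<phi> v) * (\<psi> u - \<psi> v) < 0"
    by (intro mult_pos_neg) auto
  with assms u v show False
    unfolding comonotone_on_def by (meson not_le)
qed

lemma shilkret_upper:
  assumes bounded: "\<And>\<beta>. \<mu> (A \<inter> {x\<in>X. \<beta> \<le> \<phi> x}) \<le> 1" and "\<alpha> \<in> {0..1}"
  shows "\<alpha> * \<mu> (A \<inter> {x\<in>X. \<alpha> \<le> \<phi> x}) \<le> shilkret X \<mu> A \<phi>"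
proof -
  have "\<beta> * \<mu> (A \<inter> {x\<in>X. \<beta> \<le> \<phi> x}) \<le> 1" if "\<beta> \<in> {0..1}" for \<beta> :: real
    using that bounded[of \<beta>] by (smt (verit, best) atLeastAtMost_iff mult_left_le)
  then have "bdd_above ((\<lambda>\<beta>. \<beta> * \<mu> (A \<inter> {x\<in>X. \<beta> \<le> \<phi> x})) ` {0..1})"
    by (intro bdd_aboveI2)
  then show ?thesis
    unfolding shilkret_def using \<open>\<alpha> \<in> {0..1}\<close> by (rule cSUP_upper2) simp
qed

lemma shilkret_nonneg:
  assumes "\<And>\<beta>. \<mu> (A \<inter> {x\<in>X. \<beta> \<le> \<phi> x}) \<le> 1"
  shows "0 \<le> shilkret X \<mu> A \<phi>"
  using shilkret_upper[of \<mu> A X \<phi> 0] assms by simp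

lemma shilkret_least:
  assumes "\<And>\<alpha>. \<alpha> \<in> {0..1} \<Longrightarrow> \<alpha> * \<mu> (A \<inter> {x\<in>X. \<alpha> \<le> \<phi> x}) \<le> c"
  shows "shilkret X \<mu> A \<phi> \<le> c"
  unfolding shilkret_def using assms by (intro cSUP_least) auto

lemma shilkret_square_le:
  assumes range: "\<forall>B\<in>F. 0 \<le> \<mu> B \<and> \<mu> B \<le> 1"
    and meas: "\<And>\<alpha>. A \<inter> {x\<in>X. \<alpha> \<le> \<phi> x} \<in> F" "\<And>\<alpha>. A \<inter> {x\<in>X. \<alpha> \<le> (\<phi> x)\<^sup>2} \<in> F"
    and nonneg: "\<And>x. x \<in> X \<Longrightarrow> 0 \<le> \<phi> x"
  shows "(shilkret X \<mu> A \<phi>)\<^sup>2 \<le> shilkret X \<mu> A (\<lambda>x. (\<phi> x)\<^sup>2)"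
proof -
  have "shilkret X \<mu> A \<phi> \<le> sqrt (shilkret X \<mu> A (\<lambda>x. (\<phi> x)\<^sup>2))"
  proof (rule shilkret_least)
    fix \<alpha> :: real assume \<alpha>: "\<alpha> \<in> {0..1}"
    define m where "m = \<mu> (A \<inter> {x\<in>X. \<alpha> \<le> \<phi> x})"
    have m: "0 \<le> m" "m \<le> 1"
      using range meas m_def by auto
    have "{x\<in>X. \<alpha> \<le> \<phi> x} = {x\<in>X. \<alpha>\<^sup>2 \<le> (\<phi> x)\<^sup>2}"
      using \<alpha> nonneg by (auto intro: power_mono power2_le_imp_le)
    then have "\<alpha>\<^sup>2 * m \<le> shilkret X \<mu> A (\<lambda>x. (\<phi> x)\<^sup>2)"
      using shilkret_upper[of \<mu> A X "\<lambda>x. (\<phi> x)\<^sup>2" "\<alpha>\<^sup>2"] range meas \<alpha>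
      by (simp add: m_def power_le_one)
    moreover have "(\<alpha> * m)\<^sup>2 = \<alpha>\<^sup>2 * m * m"
      by (simp add: power2_eq_square)
    moreover have "\<alpha>\<^sup>2 * m * m \<le> \<alpha>\<^sup>2 * m"
      using m by (intro mult_left_le) auto
    ultimately show "\<alpha> * \<mu> (A \<inter> {x\<in>X. \<alpha> \<le> \<phi> x}) \<le> sqrt (shilkret X \<mu> A (\<lambda>x. (\<phi> x)\<^sup>2))"
      unfolding m_def[symmetric] by (intro real_le_rsqrt) linarith
  qed
  moreover have "0 \<le> shilkret X \<mu> A \<phi>" "0 \<le> shilkret X \<mu> A (\<lambda>x. (\<phi> x)\<^sup>2)"
    using range meas by (auto intro: shilkret_nonneg)
  ultimately show ?thesis
    using power_mono[of "shilkret X \<mu> A \<phi>" _ 2] by fastforce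
qed

lemma shilkret_mult_le:
  assumes bounded: "\<And>\<beta>. \<mu> (A \<inter> {x\<in>X. \<beta> \<le> \<phi> x}) \<le> 1" "\<And>\<beta>. \<mu> (A \<inter> {x\<in>X. \<beta> \<le> \<psi> x}) \<le> 1"
    and le: "\<And>\<alpha> \<beta>. \<alpha> \<in> {0..1} \<Longrightarrow> \<beta> \<in> {0..1} \<Longrightarrow>
      \<alpha> * \<mu> (A \<inter> {x\<in>X. \<alpha> \<le> \<phi> x}) * (\<beta> * \<mu> (A \<inter> {x\<in>X. \<beta> \<le> \<psi> x})) \<le> c"
  shows "shilkret X \<mu> A \<phi> * shilkret X \<mu> A \<psi> \<le> c"
proof (cases "shilkret X \<mu> A \<phi> = 0")
  case True
  then show ?thesis
    using le[of 0 0] by simp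
next
  case False
  then have pos: "0 < shilkret X \<mu> A \<phi>"
    using bounded(1) shilkret_nonneg by (metis order_less_le)
  have "shilkret X \<mu> A \<psi> \<le> c / shilkret X \<mu> A \<phi>"
  proof (rule shilkret_least)
    fix \<beta> :: real assume \<beta>: "\<beta> \<in> {0..1}"
    define t where "t = \<beta> * \<mu> (A \<inter> {x\<in>X. \<beta> \<le> \<psi> x})"
    have "shilkret X \<mu> A \<phi> * t \<le> c"
    proof (cases "0 < t")
      case True
      have "shilkret X \<mu> A \<phi> \<le> c / t"
        using le[OF _ \<beta>] True by (intro shilkret_least) (simp add: pos_le_divide_eq t_def)
      then show ?thesis
        using True by (simp add: pos_le_divide_eq)
    next
      case False
      then show ?thesis
        using pos le[of 0 0] mult_nonneg_nonpos[of "shilkret X \<mu> A \<phi>" t] by simp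
    qed
    then show "\<beta> * \<mu> (A \<inter> {x\<in>X. \<beta> \<le> \<psi> x}) \<le> c / shilkret X \<mu> A \<phi>"
      using pos by (simp add: pos_le_divide_eq t_def mult.commute)
  qed
  then show ?thesis
    using pos by (simp add: pos_le_divide_eq mult.commute)
qed

lemma shilkret_mult_comonotone:
  assumes mm: "monotone_measure X F \<mu>" and range: "\<forall>B\<in>F. 0 \<le> \<mu> B \<and> \<mu> B \<le> 1"
    and meas: "\<And>\<alpha>. A \<inter> {x\<in>X. \<alpha> \<le> \<phi> x} \<in> F" "\<And>\<alpha>. A \<inter> {x\<in>X. \<alpha> \<le> \<psi> x} \<in> F"
      "\<And>\<alpha>. A \<inter> {x\<in>X. \<alpha> \<le> \<phi> x * \<psi> x} \<in> F"
    and como: "comonotone_on X \<phi> \<psi>"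
  shows "shilkret X \<mu> A \<phi> * shilkret X \<mu> A \<psi> \<le> shilkret X \<mu> A (\<lambda>x. \<phi> x * \<psi> x)"
proof (rule shilkret_mult_le)
  show "\<mu> (A \<inter> {x\<in>X. \<beta> \<le> \<phi> x}) \<le> 1" "\<mu> (A \<inter> {x\<in>X. \<beta> \<le> \<psi> x}) \<le> 1" for \<beta>
    using range meas by auto
next
  fix \<alpha> \<beta> :: real assume \<alpha>: "\<alpha> \<in> {0..1}" and \<beta>: "\<beta> \<in> {0..1}"
  define U where "U = A \<inter> {x\<in>X. \<alpha> \<le> \<phi> x}"
  define V where "V = A \<inter> {x\<in>X. \<beta> \<le> \<psi> x}"
  define W where "W = A \<inter> {x\<in>X. \<alpha> * \<beta> \<le> \<phi> x * \<psi> x}"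
  have UVW: "U \<in> F" "V \<in> F" "W \<in> F"
    using meas unfolding U_def V_def W_def by auto
  have "U \<inter> V \<subseteq> W"
    using \<alpha> \<beta> by (auto simp: U_def V_def W_def intro: mult_mono)
  then have "U \<subseteq> W \<or> V \<subseteq> W"
    using comonotone_on_superlevel_nested[OF como, of \<alpha> \<beta>] unfolding U_def V_def by blast
  then have "min (\<mu> U) (\<mu> V) \<le> \<mu> W"
    using mm UVW unfolding monotone_measure_def by (meson min.coboundedI1 min.coboundedI2)
  moreover have "\<mu> U * \<mu> V \<le> min (\<mu> U) (\<mu> V)"
    using range UVW by (simp add: mult_left_le mult_left_le_one_le)
  ultimately have "\<alpha> * \<beta> * (\<mu> U * \<mu> V) \<le> \<alpha> * \<beta> * \<mu> W"
    using \<alpha> \<beta> by (intro mult_left_mono) auto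
  also have "\<dots> \<le> shilkret X \<mu> A (\<lambda>x. \<phi> x * \<psi> x)"
    using shilkret_upper[of \<mu> A X "\<lambda>x. \<phi> x * \<psi> x" "\<alpha> * \<beta>"] range meas \<alpha> \<beta>
    by (auto simp: W_def mult_le_one)
  finally show "\<alpha> * \<mu> U * (\<beta> * \<mu> V) \<le> shilkret X \<mu> A (\<lambda>x. \<phi> x * \<psi> x)"
    by (simp add: mult_ac)
qed

lemma le_fourth_root_bound:
  fixes n m a p q :: real
  assumes "0 \<le> n" "0 < m" "0 < a" "a \<le> 1" "n\<^sup>2 \<le> p" "(n * m)\<^sup>2 \<le> q"
  shows "n \<le> 1 / sqrt (a * m) * p powr (1/4) * q powr (1/4)"
proof -
  have root4: "sqrt y \<le> z powr (1/4)" if "0 \<le> y" "y\<^sup>2 \<le> z" for y z :: real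
  proof -
    have "sqrt y = (y\<^sup>2) powr (1/4)"
    proof (cases "y = 0")
      case False
      then have "(y\<^sup>2) powr (1/4) = (y powr 2) powr (1/4)"
        using that by (simp add: powr_numeral)
      also have "\<dots> = y powr (1/2)"
        by (simp add: powr_powr)
      also have "\<dots> = sqrt y"
        using that(1) by (rule powr_half_sqrt)
      finally show ?thesis ..
    qed simp
    also have "\<dots> \<le> z powr (1/4)"
      using that by (intro powr_mono2) auto
    finally show ?thesis .
  qed
  have "n * sqrt m = sqrt n * sqrt (n * m)"
    using assms by (simp add: real_sqrt_mult flip: mult.assoc)
  also have "\<dots> \<le> p powr (1/4) * q powr (1/4)"
    using assms by (intro mult_mono root4) auto
  finally have "n * sqrt m \<le> p powr (1/4) * q powr (1/4)" .
  have "n \<le> n / sqrt a"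
    using assms by (simp add: le_divide_eq mult_left_le)
  also have "\<dots> = 1 / sqrt (a * m) * (n * sqrt m)"
    using assms by (simp add: real_sqrt_mult)
  also have "\<dots> \<le> 1 / sqrt (a * m) * (p powr (1/4) * q powr (1/4))"
    using \<open>n * sqrt m \<le> _\<close> assms by (intro mult_left_mono) auto
  finally show ?thesis
    by (simp add: mult.assoc)
qed

theorem mainTheorem2:
  fixes X :: "real set" and F :: "real set set" and \<mu> :: "real set \<Rightarrow> real"
    and A :: "real set" and f :: "real \<Rightarrow> real"
  assumes X_sub: "X \<subseteq> {0..1}"
    and sigma: "sigma_algebra X F"
    and borel_in: "\<forall>B\<in>sets borel. X \<inter> B \<in> F"
    and mm: "monotone_measure X F \<mu>"
    and mu_range: "\<forall>B\<in>F. 0 \<le> \<mu> B \<and> \<mu> B \<le> 1"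
    and A_in: "A \<in> F"
    and f_range: "\<forall>x\<in>X. 0 \<le> f x \<and> f x \<le> 1"
    and f_mono: "mono_on X f"
    and f_meas: "\<forall>B\<in>sets borel. f -` B \<inter> X \<in> F"
    and K_pos: "\<mu> A * shilkret X \<mu> A (\<lambda>x. x) > 0"
  shows "shilkret X \<mu> A f \<le>
           1 / sqrt (\<mu> A * shilkret X \<mu> A (\<lambda>x. x))
           * (shilkret X \<mu> A (\<lambda>x. (f x)\<^sup>2)) powr (1/4)
           * (shilkret X \<mu> A (\<lambda>x. x\<^sup>2 * (f x)\<^sup>2)) powr (1/4)"
proof -
  interpret sigma_algebra X F by (rule sigma)
  have level_in_F: "A \<inter> {x\<in>X. c \<le> g x} \<in> F" if "mono_on X g" for g :: "real \<Rightarrow> real" and c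
    using A_in mono_on_superlevel_in_sigma[OF that borel_in] by (rule Int)
  have bounded: "\<mu> (A \<inter> {x\<in>X. c \<le> g x}) \<le> 1" if "mono_on X g" for g :: "real \<Rightarrow> real" and c
    using mu_range level_in_F[OF that] by blast
  have f_nonneg: "\<And>x. x \<in> X \<Longrightarrow> 0 \<le> f x" and id_nonneg: "\<And>x. x \<in> X \<Longrightarrow> 0 \<le> x"
    using f_range X_sub by auto
  have mono_id: "mono_on X (\<lambda>x. x)"
    by (simp add: mono_onI)
  have mono_fx: "mono_on X (\<lambda>x. f x * x)"
    using f_mono mono_id f_nonneg id_nonneg by (rule mono_on_mult_nonneg)
  define n where "n = shilkret X \<mu> A f"
  define nx where "nx = shilkret X \<mu> A (\<lambda>x. x)"
  have n_nonneg: "0 \<le> n" and nx_nonneg: "0 \<le> nx"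
    unfolding n_def nx_def using bounded f_mono mono_id by (auto intro: shilkret_nonneg)
  have "n\<^sup>2 \<le> shilkret X \<mu> A (\<lambda>x. (f x)\<^sup>2)"
    unfolding n_def using mu_range level_in_F f_mono mono_on_power2_nonneg[OF f_mono f_nonneg] f_nonneg
    by (intro shilkret_square_le) auto
  moreover have "(n * nx)\<^sup>2 \<le> shilkret X \<mu> A (\<lambda>x. x\<^sup>2 * (f x)\<^sup>2)"
  proof -
    have "n * nx \<le> shilkret X \<mu> A (\<lambda>x. f x * x)"
      unfolding n_def nx_def
      using mm mu_range level_in_F[OF f_mono] level_in_F[OF mono_id] level_in_F[OF mono_fx]
        mono_on_imp_comonotone_on[OF f_mono mono_id]
      by (rule shilkret_mult_comonotone)
    then have "(n * nx)\<^sup>2 \<le> (shilkret X \<mu> A (\<lambda>x. f x * x))\<^sup>2"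
      using n_nonneg nx_nonneg by (intro power_mono) auto
    also have "\<dots> \<le> shilkret X \<mu> A (\<lambda>x. (f x * x)\<^sup>2)"
      using mu_range level_in_F mono_fx mono_on_power2_nonneg[OF mono_fx] f_nonneg id_nonneg
      by (intro shilkret_square_le) auto
    finally show ?thesis
      by (simp add: power_mult_distrib mult.commute)
  qed
  moreover have "0 < \<mu> A" "\<mu> A \<le> 1" "0 < nx"
    using K_pos mu_range A_in nx_nonneg unfolding nx_def by (auto simp: zero_less_mult_iff)
  ultimately show ?thesis
    unfolding n_def[symmetric] nx_def[symmetric] using n_nonneg by (intro le_fourth_root_bound) auto
qed

end
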